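(* Let $y\in\mathbb R^n$, let $X\in\mathbb R^{n\times p}$ have nonzero columns $x_1,\dots,x_p$, and let $\sigma^2>0$ be fixed. Then the maximization problem $\operatorname{Argmax}_{\gamma\in[0,\infty)^p}\ell(\sigma^2,\gamma)$ has at least one solution $\hat\gamma=(\hat\gamma_1,\ldots,\hat\gamma_p)$, and it can be chosen with the following property: for every $j\in\{1,\dots,p\}$, \[ \hat\gamma_{j}=\begin{cases}\dfrac{\left(x_j'C_j^{-1}y\right)^2-x_j'C_j^{-1}x_j}{\left(x_j'C_j^{-1}x_j\right)^2} & \text{if } \left(x_j'C_j^{-1}y\right)^2> x_j'C_j^{-1}x_j,\\[2mm] 0 &\text{otherwise},\end{cases} \] where \[C_j= \sigma^2 I_n +\sum_{k\in I_{\hat\gamma}\setminus\{j\}}\hat\gamma_{k}x_kx_k',\qquad I_{\hat\gamma}=\{k:\hat\gamma_k\neq 0\}.\]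
   Context: No probabilistic assumptions are made here: $y$ and $X$ are fixed. For $\gamma\in\Theta=[0,\infty)^p$ let $I_\gamma=\{1\le j\le p:\gamma_j\neq 0\}$ and $C_\gamma=\sigma^2 I_n+\sum_{j\in I_\gamma}\gamma_j x_jx_j'$, where $I_n$ is the $n\times n$ identity. The (marginal, type-II) log-likelihood is $\ell(\sigma^2,\gamma)=-\tfrac12\log\det(C_\gamma)-\tfrac12\operatorname{Tr}(C_\gamma^{-1}yy')$. It is the log-likelihood of $y\sim N(0,C_\gamma)$, arising from the model $y\sim N(X\beta,\sigma^2 I_n)$ with independent priors $\beta_j\sim N(0,\gamma_j)$, where $N(0,0)$ denotes the point mass at $0$. *)

theory Defs
  imports "HOL-Analysis.Analysis"
begin

definition outer :: "real^'n \<Rightarrow> real^'n \<Rightarrow> real^'n^'n" where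
  "outer u v = (\<chi> i k. u $ i * v $ k)"

definition supp_idx :: "('p::finite \<Rightarrow> real) \<Rightarrow> 'p set" where
  "supp_idx g = {j. g j \<noteq> 0}"

definition Cmat :: "real \<Rightarrow> ('p::finite \<Rightarrow> real^'n) \<Rightarrow> ('p \<Rightarrow> real) \<Rightarrow> real^'n^'n" where
  "Cmat s2 x g = s2 *\<^sub>R mat 1 + (\<Sum>j\<in>supp_idx g. g j *\<^sub>R outer (x j) (x j))"

definition loglik :: "real^'n \<Rightarrow> ('p::finite \<Rightarrow> real^'n) \<Rightarrow> real \<Rightarrow> ('p \<Rightarrow> real) \<Rightarrow> real" where
  "loglik y x s2 g =
     - (1/2) * ln (det (Cmat s2 x g))
     - (1/2) * trace (matrix_inv (Cmat s2 x g) ** outer y y)"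

end

theory Submission
  imports Defs
begin

text \<open>
  Write \<open>C\<^sub>j\<close> for the covariance with the \<open>j\<close>-th term removed. By the matrix determinant
  lemma and the Sherman--Morrison formula, \<open>\<ell>\<close> restricted to the \<open>j\<close>-th coordinate is, up to
  a constant, \<open>\<phi>(t) = t a\<^sup>2 / (1 + t b) - ln (1 + t b)\<close> with \<open>a = x\<^sub>j' C\<^sub>j\<^sup>-\<^sup>1 y\<close> and
  \<open>b = x\<^sub>j' C\<^sub>j\<^sup>-\<^sup>1 x\<^sub>j > 0\<close>. In the variable \<open>s = 1 + t b\<close> this is \<open>c (1 - 1/s) - ln s\<close>
  with \<open>c = a\<^sup>2/b\<close>, whose unique maximiser on \<open>s \<ge> 1\<close> is \<open>s = max c 1\<close>; this gives
  the stated formula, and every global maximiser must satisfy it coordinatewise.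
  A maximiser exists because \<open>\<ell>\<close> is continuous on the orthant and coercive:
  \<open>det C\<^sub>\<gamma> \<ge> \<sigma>\<^sup>2\<^sup>n (1 + \<gamma>\<^sub>j x\<^sub>j' x\<^sub>j / \<sigma>\<^sup>2)\<close> for every \<open>j\<close> and \<open>y' C\<^sub>\<gamma>\<^sup>-\<^sup>1 y \<ge> 0\<close>,
  so \<open>\<ell>\<close> falls below \<open>\<ell>(0)\<close> outside a large box.
\<close>

lemma outer_mult_vector: "outer a b *v u = (b \<bullet> u) *\<^sub>R (a::real^'n)"
  by (simp add: vec_eq_iff matrix_vector_mult_def outer_def inner_vec_def sum_distrib_left
      mult.commute mult.left_commute)

lemma transpose_outer: "transpose (outer a b) = outer b (a::real^'n)"
  by (simp add: vec_eq_iff transpose_def outer_def mult.commute)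

lemma matrix_mul_outer: "M ** outer a b = outer (M *v a) (b::real^'n)"
  by (simp add: vec_eq_iff matrix_matrix_mult_def matrix_vector_mult_def outer_def
      sum_distrib_right mult.assoc)

lemma outer_scaleR_left: "outer (t *\<^sub>R a) b = t *\<^sub>R outer a (b::real^'n)"
  by (simp add: vec_eq_iff outer_def)

lemma trace_mul_outer: "trace (A ** outer y y) = y \<bullet> (A *v (y::real^'n))"
  by (simp add: trace_def matrix_matrix_mult_def outer_def inner_vec_def matrix_vector_mult_def
      sum_distrib_left mult.commute mult.left_commute)

lemma transpose_add: "transpose (A + B) = transpose A + transpose (B::'a::semiring_1^'n^'m)"
  by (simp add: transpose_def vec_eq_iff)

lemma
  assumes "invertible (M::'a::field^'n^'n)"
  shows matrix_vector_mul_matrix_inv_right: "M *v (matrix_inv M *v y) = y"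
    and matrix_vector_mul_matrix_inv_left: "matrix_inv M *v (M *v y) = y"
proof -
  have "M ** matrix_inv M = mat 1 \<and> matrix_inv M ** M = mat 1"
    using assms unfolding invertible_def matrix_inv_def by (rule someI_ex)
  then show "M *v (matrix_inv M *v y) = y" "matrix_inv M *v (M *v y) = y"
    by (auto simp: matrix_vector_mul_assoc)
qed

definition pos_def :: "real^'n^'n \<Rightarrow> bool" where
  "pos_def M \<longleftrightarrow> transpose M = M \<and> (\<forall>u. u \<noteq> 0 \<longrightarrow> u \<bullet> (M *v u) > 0)"

lemma pos_def_scaleR_mat: "s > 0 \<Longrightarrow> pos_def (s *\<^sub>R mat 1 :: real^'n^'n)"
  by (simp add: pos_def_def transpose_scalar scaleR_matrix_vector_assoc[symmetric])

lemma pos_def_add_outer: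
  assumes "pos_def M" "t \<ge> 0"
  shows "pos_def (M + t *\<^sub>R outer a a)"
proof -
  have "u \<bullet> ((M + t *\<^sub>R outer a a) *v u) = u \<bullet> (M *v u) + t * (a \<bullet> u)\<^sup>2" for u
    by (simp add: matrix_vector_mult_add_rdistrib outer_mult_vector inner_add_right
        power2_eq_square inner_commute scaleR_matrix_vector_assoc[symmetric])
  moreover have "transpose (M + t *\<^sub>R outer a a) = M + t *\<^sub>R outer a a"
    using assms by (simp add: pos_def_def transpose_add transpose_scalar transpose_outer)
  ultimately show ?thesis
    using assms unfolding pos_def_def by (smt (verit) mult_nonneg_nonneg zero_le_power2)
qed

lemma pos_def_invertible:
  assumes "pos_def M"
  shows "invertible M"
proof -
  have "\<forall>u. M *v u = 0 \<longrightarrow> u = 0"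
    using assms unfolding pos_def_def by (metis inner_zero_right less_irrefl)
  then show ?thesis
    using matrix_left_invertible_ker invertible_left_inverse by blast
qed

lemma pos_def_inner_matrix_inv_commute:
  assumes "pos_def M"
  shows "y \<bullet> (matrix_inv M *v x) = x \<bullet> (matrix_inv M *v y)"
proof -
  have inv: "invertible M" and sym: "transpose M = M"
    using assms pos_def_invertible pos_def_def by auto
  have "y \<bullet> (matrix_inv M *v x) = (M *v (matrix_inv M *v y)) \<bullet> (matrix_inv M *v x)"
    by (simp add: matrix_vector_mul_matrix_inv_right[OF inv])
  also have "\<dots> = (matrix_inv M *v y) \<bullet> x"
    by (metis sym dot_lmul_matrix vector_transpose_matrix matrix_vector_mul_matrix_inv_right[OF inv])
  finally show ?thesis by (simp add: inner_commute)
qed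

lemma
  assumes "pos_def M"
  shows pos_def_matrix_inv_pos: "x \<noteq> 0 \<Longrightarrow> x \<bullet> (matrix_inv M *v x) > 0"
    and pos_def_matrix_inv_nonneg: "x \<bullet> (matrix_inv M *v x) \<ge> 0"
proof -
  have inv: "invertible M" using assms pos_def_invertible by blast
  \<comment> \<open>with \<open>z = M\<^sup>-\<^sup>1 x\<close>, the form \<open>x' M\<^sup>-\<^sup>1 x\<close> equals \<open>z' M z\<close>\<close>
  have key: "x \<bullet> (matrix_inv M *v x) = (matrix_inv M *v x) \<bullet> (M *v (matrix_inv M *v x))"
    by (simp add: matrix_vector_mul_matrix_inv_right[OF inv] inner_commute)
  show "x \<noteq> 0 \<Longrightarrow> x \<bullet> (matrix_inv M *v x) > 0"
    by (metis key assms pos_def_def matrix_vector_mul_matrix_inv_right[OF inv]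
        matrix_vector_mult_0_right)
  show "x \<bullet> (matrix_inv M *v x) \<ge> 0"
    using key assms unfolding pos_def_def by (metis inner_zero_left order_less_imp_le order_refl)
qed

lemma vec_lambda_row: "(\<chi> i. row i A) = (A::'a^'n^'m)"
  by (simp add: vec_eq_iff row_def)

lemma det_add_row_multiples:
  fixes R :: "'a::comm_ring_1^'n^'n"
  assumes "finite S" "k \<notin> S"
  shows "det (\<chi> i. if i \<in> S then row i R + c i *s row k R else row i R) = det R"
  using assms
proof (induction S rule: finite_induct)
  case empty
  then show ?case by (simp add: vec_lambda_row)
next
  case (insert i S)
  let ?M = "(\<chi> l. if l \<in> S then row l R + c l *s row k R else row l R) :: 'a^'n^'n"
  have ik: "i \<noteq> k" using insert by auto
  have "(\<chi> l. if l \<in> insert i S then row l R + c l *s row k R else row l R)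
      = (\<chi> l. if l = i then row i ?M + c i *s row k ?M else row l ?M)"
    using insert ik by (auto simp: vec_eq_iff row_def)
  then show ?case using det_row_operation[OF ik, of ?M "c i"] insert by simp
qed

lemma det_add_rank1_rows:
  fixes A :: "'a::comm_ring_1^'n^'n"
  assumes "finite S"
  shows "det (\<chi> i. if i \<in> S then row i A + u$i *s w else row i A)
       = det A + (\<Sum>i\<in>S. u$i * det (\<chi> l. if l = i then w else row l A))"
  using assms
proof (induction S rule: finite_induct)
  case empty
  show ?case by (simp add: vec_lambda_row)
next
  case (insert k S)
  let ?Q = "(\<chi> i. if i \<in> S then row i A + u$i *s w else row i A) :: 'a^'n^'n"
  have insert_row: "(\<chi> i. if i \<in> insert k S then row i A + u$i *s w else row i A)
     = (\<chi> i. if i = k then row k A + u$k *s w else row i ?Q)"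
    using insert by (auto simp: vec_eq_iff row_def)
  have unchanged_row: "(\<chi> i. if i = k then row k A else row i ?Q) = ?Q"
    using insert by (auto simp: vec_eq_iff row_def)
  \<comment> \<open>once row \<open>k\<close> is \<open>w\<close>, the rank-one updates of the other rows are row operations\<close>
  have replaced_row:
    "det (\<chi> i. if i = k then w else row i ?Q) = det (\<chi> l. if l = k then w else row l A)"
  proof -
    let ?R = "(\<chi> l. if l = k then w else row l A) :: 'a^'n^'n"
    have "(\<chi> i. if i \<in> S then row i ?R + u$i *s row k ?R else row i ?R)
        = (\<chi> i. if i = k then w else row i ?Q)"
      using insert by (auto simp: vec_eq_iff row_def)
    then show ?thesis using det_add_row_multiples[of S k ?R "\<lambda>i. u$i"] insert by simp
  qed
  have "det (\<chi> i. if i = k then row k A + u$k *s w else row i ?Q)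
      = det (\<chi> i. if i = k then row k A else row i ?Q)
        + det (\<chi> i. if i = k then u$k *s w else row i ?Q)"
    by (rule det_row_add[of k "\<lambda>_. row k A" "\<lambda>_. u$k *s w" "\<lambda>i. row i ?Q"])
  also have "det (\<chi> i. if i = k then u$k *s w else row i ?Q)
      = u$k * det (\<chi> i. if i = k then w else row i ?Q)"
    by (rule det_row_mul[of k "u$k" "\<lambda>_. w" "\<lambda>i. row i ?Q"])
  finally have "det (\<chi> i. if i = k then row k A + u$k *s w else row i ?Q)
      = det ?Q + u$k * det (\<chi> l. if l = k then w else row l A)"
    unfolding unchanged_row replaced_row .
  then show ?case
    unfolding insert_row insert.IH sum.insert[OF insert.hyps] by (simp add: algebra_simps)
qed

lemma det_mat1_replace_row:
  "det (\<chi> l. if l = i then w else row l (mat 1 :: 'a::field^'n^'n)) = w$i"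
proof -
  let ?A = "(\<chi> l. if l = i then w else row l (mat 1 :: 'a^'n^'n))"
  have "transpose ?A = (\<chi> a b. if b = i then ((mat 1::'a^'n^'n) *v w)$a else (mat 1::'a^'n^'n)$a$b)"
    unfolding transpose_def row_def matrix_vector_mul_lid
    by (intro arg_cong[where f=vec_lambda] ext) (auto simp: mat_def)
  then have "det (transpose ?A) = w$i * det (mat 1::'a^'n^'n)"
    by (simp only: cramer_lemma)
  then show ?thesis by simp
qed

lemma det_mat1_add_outer: "det (mat 1 + outer u w) = 1 + u \<bullet> (w::real^'n)"
proof -
  have "mat 1 + outer u w
      = (\<chi> i. if i \<in> UNIV then row i (mat 1) + u$i *s w else row i (mat 1 :: real^'n^'n))"
    by (simp add: vec_eq_iff row_def outer_def mat_def)
  then show ?thesis using det_add_rank1_rows[of UNIV "mat 1 :: real^'n^'n" u w]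
    by (simp add: det_mat1_replace_row inner_vec_def)
qed

lemma det_add_outer:
  assumes "invertible (M::real^'n^'n)"
  shows "det (M + t *\<^sub>R outer a a) = det M * (1 + t * (a \<bullet> (matrix_inv M *v a)))"
proof -
  let ?z = "t *\<^sub>R (matrix_inv M *v a)"
  have "M ** (mat 1 + outer ?z a) = M + outer (M *v ?z) a"
    by (simp add: matrix_add_ldistrib matrix_mul_outer)
  also have "M *v ?z = t *\<^sub>R a"
    by (simp add: matrix_vector_mult_scaleR matrix_vector_mul_matrix_inv_right[OF assms])
  finally have "M + t *\<^sub>R outer a a = M ** (mat 1 + outer ?z a)"
    by (simp add: outer_scaleR_left)
  then show ?thesis
    by (simp add: det_mul det_mat1_add_outer inner_commute)
qed

lemma inner_matrix_inv_add_outer: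
  assumes "pos_def M" "t \<ge> 0"
  shows "y \<bullet> (matrix_inv (M + t *\<^sub>R outer a a) *v y) = y \<bullet> (matrix_inv M *v y)
     - t * (a \<bullet> (matrix_inv M *v y))\<^sup>2 / (1 + t * (a \<bullet> (matrix_inv M *v a)))"
proof -
  let ?N = "M + t *\<^sub>R outer a a"
  have invN: "invertible ?N" using pos_def_add_outer pos_def_invertible assms by blast
  have invM: "invertible M" using pos_def_invertible assms by blast
  define w where "w = matrix_inv ?N *v y"
  define b where "b = a \<bullet> (matrix_inv M *v a)"
  define c where "c = a \<bullet> (matrix_inv M *v y)"
  have "?N *v w = y" using matrix_vector_mul_matrix_inv_right[OF invN] w_def by simp
  then have "M *v w + (t * (a \<bullet> w)) *\<^sub>R a = y"
    by (simp add: matrix_vector_mult_add_rdistrib scaleR_matrix_vector_assoc[symmetric]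
        outer_mult_vector)
  then have "matrix_inv M *v (M *v w + (t * (a \<bullet> w)) *\<^sub>R a) = matrix_inv M *v y" by simp
  then have w_eq: "w + (t * (a \<bullet> w)) *\<^sub>R (matrix_inv M *v a) = matrix_inv M *v y"
    by (simp add: matrix_vector_right_distrib matrix_vector_mult_scaleR
        matrix_vector_mul_matrix_inv_left[OF invM])
  then have "(a \<bullet> w) * (1 + t * b) = c"
    by (metis (no_types, lifting) b_def c_def inner_add_right inner_scaleR_right
        distrib_left mult.commute mult.left_commute mult_1_right)
  moreover have "1 + t * b > 0"
    using pos_def_matrix_inv_nonneg[OF assms(1)] assms(2) b_def
    by (smt (verit) mult_nonneg_nonneg)
  ultimately have aw: "a \<bullet> w = c / (1 + t * b)" by (simp add: field_simps)
  have "y \<bullet> (matrix_inv M *v a) = c"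
    using pos_def_inner_matrix_inv_commute[OF assms(1)] c_def by simp
  then have "y \<bullet> w = y \<bullet> (matrix_inv M *v y) - t * (a \<bullet> w) * c"
    by (simp flip: w_eq add: algebra_simps)
  then show ?thesis using aw w_def c_def b_def by (simp add: power2_eq_square)
qed

lemma pos_def_add_sum_outer:
  fixes x :: "'p \<Rightarrow> real^'n"
  assumes "finite S" "pos_def B" "det B > 0" "\<forall>k\<in>S. g k \<ge> 0"
  shows "pos_def (B + (\<Sum>k\<in>S. g k *\<^sub>R outer (x k) (x k)))
       \<and> det (B + (\<Sum>k\<in>S. g k *\<^sub>R outer (x k) (x k))) \<ge> det B"
  using assms
proof (induction S rule: finite_induct)
  case empty
  then show ?case by simp
next
  case (insert k S)
  let ?P = "B + (\<Sum>k\<in>S. g k *\<^sub>R outer (x k) (x k))"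
  have IH: "pos_def ?P" "det ?P \<ge> det B" and gk: "g k \<ge> 0" using insert by auto
  have eq: "B + (\<Sum>k\<in>insert k S. g k *\<^sub>R outer (x k) (x k)) = ?P + g k *\<^sub>R outer (x k) (x k)"
    using insert by (simp add: add_ac)
  have "det ?P * 1 \<le> det ?P * (1 + g k * (x k \<bullet> (matrix_inv ?P *v x k)))"
    using IH insert.prems gk pos_def_matrix_inv_nonneg[OF IH(1)] by (intro mult_left_mono) auto
  then show ?case
    unfolding eq det_add_outer[OF pos_def_invertible[OF IH(1)]]
    using pos_def_add_outer[OF IH(1) gk] IH(2) by simp
qed

lemma det_scaleR_mat: "det (s *\<^sub>R mat 1 :: real^'n^'n) = s ^ CARD('n)"
  by (subst det_diagonal) (simp_all add: mat_def)

lemma continuous_on_det: "continuous_on S f \<Longrightarrow> continuous_on S (\<lambda>v. det (f v :: real^'n^'n))"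
  unfolding det_def by (intro continuous_intros)

definition coord_profile :: "real \<Rightarrow> real \<Rightarrow> real \<Rightarrow> real" where
  "coord_profile a b t = t * a\<^sup>2 / (1 + t * b) - ln (1 + t * b)"

definition coord_argmax :: "real \<Rightarrow> real \<Rightarrow> real" where
  "coord_argmax a b = (if a\<^sup>2 > b then (a\<^sup>2 - b) / b\<^sup>2 else 0)"

lemma ln_less_minus_one: "(z::real) > 0 \<Longrightarrow> z \<noteq> 1 \<Longrightarrow> ln z < z - 1"
  using ln_le_minus_one ln_eq_minus_one by force

lemma coord_argmax_nonneg: "b > 0 \<Longrightarrow> coord_argmax a b \<ge> 0"
  by (simp add: coord_argmax_def)

lemma coord_profile_less_argmax:
  assumes b: "b > 0" and t: "t \<ge> 0" and ne: "t \<noteq> coord_argmax a b"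
  shows "coord_profile a b t < coord_profile a b (coord_argmax a b)"
proof -
  define c where "c = a\<^sup>2 / b"
  define s where "s = 1 + t * b"
  have s1: "s \<ge> 1" using b t s_def by simp
  have "c - c / s = c * (s - 1) / s" using s1 by (simp add: field_simps)
  also have "\<dots> = t * a\<^sup>2 / (1 + t * b)" using b unfolding c_def s_def by simp
  finally have profile_eq: "coord_profile a b t = c - c / s - ln s"
    unfolding coord_profile_def s_def by simp
  show ?thesis
  proof (cases "a\<^sup>2 > b")
    case True
    have c1: "c > 1" using True b c_def by simp
    have argmax: "1 + coord_argmax a b * b = c"
      using b True unfolding c_def coord_argmax_def by (simp add: field_simps power2_eq_square)
    have "s \<noteq> c"
      using ne True b unfolding s_def c_def coord_argmax_def
      by (auto simp: field_simps power2_eq_square)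
    then have "ln (c / s) < c / s - 1" using ln_less_minus_one s1 c1 by simp
    moreover have "ln (c / s) = ln c - ln s" using s1 c1 by (simp add: ln_div)
    moreover have "a \<noteq> 0" using True b by auto
    then have "coord_profile a b (coord_argmax a b) = c - 1 - ln c"
      using b True unfolding coord_profile_def argmax
      by (simp add: coord_argmax_def True c_def field_simps power2_eq_square)
    ultimately show ?thesis using profile_eq by linarith
  next
    case False
    have c1: "c \<le> 1" using False b c_def by simp
    have "s > 1" using ne False t b s_def by (simp add: coord_argmax_def)
    then have "ln (1 / s) < 1 / s - 1" using ln_less_minus_one by simp
    moreover have "ln (1 / s) = - ln s" using \<open>s > 1\<close> by (simp add: ln_div)
    moreover have "c * (1 - 1 / s) \<le> 1 - 1 / s" using c1 \<open>s > 1\<close> by (simp add: mult_left_le_one_le)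
    ultimately show ?thesis
      using False profile_eq unfolding coord_profile_def coord_argmax_def by (simp add: algebra_simps)
  qed
qed

lemma Cmat_eq_sum_UNIV: "Cmat s2 x g = s2 *\<^sub>R mat 1 + (\<Sum>k\<in>UNIV. g k *\<^sub>R outer (x k) (x k))"
  unfolding Cmat_def by (subst sum.mono_neutral_left[of UNIV]) (auto simp: supp_idx_def)

lemma sum_supp_idx_minus_outer:
  "(\<Sum>k\<in>supp_idx g - {j}. g k *\<^sub>R outer (x k) (x k))
     = (\<Sum>k\<in>UNIV - {j}. g k *\<^sub>R outer (x k) (x k :: real^'n))"
  by (rule sum.mono_neutral_left) (auto simp: supp_idx_def)

lemma Cmat_fun_upd:
  "Cmat s2 x (g(j := t))
     = (s2 *\<^sub>R mat 1 + (\<Sum>k\<in>UNIV - {j}. g k *\<^sub>R outer (x k) (x k))) + t *\<^sub>R outer (x j) (x j)"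
proof -
  have "(\<Sum>k\<in>UNIV. (g(j := t)) k *\<^sub>R outer (x k) (x k))
      = t *\<^sub>R outer (x j) (x j) + (\<Sum>k\<in>UNIV - {j}. (g(j := t)) k *\<^sub>R outer (x k) (x k))"
    by (subst sum.remove[of _ j]) simp_all
  also have "(\<Sum>k\<in>UNIV - {j}. (g(j := t)) k *\<^sub>R outer (x k) (x k))
      = (\<Sum>k\<in>UNIV - {j}. g k *\<^sub>R outer (x k) (x k))"
    by (rule sum.cong) auto
  finally show ?thesis unfolding Cmat_eq_sum_UNIV by (simp add: add_ac)
qed

lemma pos_def_partial_Cmat:
  fixes x :: "'p::finite \<Rightarrow> real^'n"
  assumes "s2 > 0" "\<forall>j. g j \<ge> 0"
  shows "pos_def (s2 *\<^sub>R mat 1 + (\<Sum>k\<in>S. g k *\<^sub>R outer (x k) (x k)))"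
    and "det (s2 *\<^sub>R mat 1 + (\<Sum>k\<in>S. g k *\<^sub>R outer (x k) (x k))) \<ge> s2 ^ CARD('n)"
  using pos_def_add_sum_outer[OF _ pos_def_scaleR_mat, of S s2 g x] assms
  unfolding det_scaleR_mat by auto

lemma pos_def_Cmat:
  fixes x :: "'p::finite \<Rightarrow> real^'n"
  assumes "s2 > 0" "\<forall>j. g j \<ge> 0"
  shows "pos_def (Cmat s2 x g)" "det (Cmat s2 x g) \<ge> s2 ^ CARD('n)"
  using pos_def_partial_Cmat[OF assms] unfolding Cmat_eq_sum_UNIV by auto

lemma loglik_eq_quadratic_form:
  "loglik y x s2 g
     = - (1/2) * ln (det (Cmat s2 x g)) - (1/2) * (y \<bullet> (matrix_inv (Cmat s2 x g) *v y))"
  unfolding loglik_def trace_mul_outer ..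

lemma loglik_fun_upd:
  fixes x :: "'p::finite \<Rightarrow> real^'n" and y :: "real^'n"
  assumes s2: "s2 > 0" and xj: "x j \<noteq> 0" and g: "\<forall>k. g k \<ge> 0" and t: "t \<ge> 0"
  defines "Cj \<equiv> s2 *\<^sub>R mat 1 + (\<Sum>k\<in>UNIV - {j}. g k *\<^sub>R outer (x k) (x k))"
  shows "loglik y x s2 (g(j := t)) = loglik y x s2 (g(j := 0))
           + (1/2) * coord_profile (x j \<bullet> (matrix_inv Cj *v y)) (x j \<bullet> (matrix_inv Cj *v x j)) t"
proof -
  define a where "a = x j \<bullet> (matrix_inv Cj *v y)"
  define b where "b = x j \<bullet> (matrix_inv Cj *v x j)"
  have Cj: "pos_def Cj" "det Cj > 0"
    using pos_def_partial_Cmat[OF s2 g, where S = "UNIV - {j}" and x = x] s2 unfolding Cj_def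
    by (auto intro: less_le_trans[OF zero_less_power])
  have b: "b > 0" unfolding b_def by (rule pos_def_matrix_inv_pos[OF Cj(1) xj])
  have loglik_at: "loglik y x s2 (g(j := u)) = - (1/2) * ln (det Cj)
      - (1/2) * (y \<bullet> (matrix_inv Cj *v y)) + (1/2) * coord_profile a b u" if "u \<ge> 0" for u
  proof -
    have "1 + u * b > 0" using that b by (smt (verit) mult_nonneg_nonneg)
    then have ldet: "ln (det (Cmat s2 x (g(j := u)))) = ln (det Cj) + ln (1 + u * b)"
      using Cj unfolding Cmat_fun_upd Cj_def[symmetric] b_def
      by (simp add: det_add_outer[OF pos_def_invertible] ln_mult)
    have quad: "y \<bullet> (matrix_inv (Cmat s2 x (g(j := u))) *v y)
        = y \<bullet> (matrix_inv Cj *v y) - u * a\<^sup>2 / (1 + u * b)"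
      unfolding Cmat_fun_upd Cj_def[symmetric] a_def b_def
      by (rule inner_matrix_inv_add_outer[OF Cj(1) that])
    show ?thesis
      unfolding loglik_eq_quadratic_form coord_profile_def ldet quad
      by (simp add: right_diff_distrib distrib_left)
  qed
  show ?thesis
    unfolding a_def[symmetric] b_def[symmetric] loglik_at[OF t] loglik_at[OF order_refl]
    by (simp add: coord_profile_def)
qed

lemma loglik_argmax_coordinate:
  fixes x :: "'p::finite \<Rightarrow> real^'n" and y :: "real^'n"
  assumes s2: "s2 > 0" and xj: "x j \<noteq> 0" and g: "\<forall>k. g k \<ge> 0"
    and g_max: "\<forall>h. (\<forall>k. h k \<ge> 0) \<longrightarrow> loglik y x s2 h \<le> loglik y x s2 g"
  defines "Cj \<equiv> s2 *\<^sub>R mat 1 + (\<Sum>k\<in>supp_idx g - {j}. g k *\<^sub>R outer (x k) (x k))"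
  shows "g j = coord_argmax (x j \<bullet> (matrix_inv Cj *v y)) (x j \<bullet> (matrix_inv Cj *v x j))"
proof (rule ccontr)
  define a where "a = x j \<bullet> (matrix_inv Cj *v y)"
  define b where "b = x j \<bullet> (matrix_inv Cj *v x j)"
  assume "g j \<noteq> coord_argmax a b"
  have "b > 0"
    unfolding b_def Cj_def sum_supp_idx_minus_outer
    by (rule pos_def_matrix_inv_pos[OF pos_def_partial_Cmat(1)[OF s2 g] xj])
  have "coord_profile a b (g j) < coord_profile a b (coord_argmax a b)"
    by (rule coord_profile_less_argmax) (use \<open>b > 0\<close> g \<open>g j \<noteq> _\<close> in auto)
  moreover have "loglik y x s2 (g(j := t)) = loglik y x s2 (g(j := 0)) + (1/2) * coord_profile a b t"
    if "t \<ge> 0" for t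
    using loglik_fun_upd[where x = x and j = j and y = y and g = g, OF s2 xj g that]
    unfolding a_def b_def Cj_def sum_supp_idx_minus_outer .
  ultimately have "loglik y x s2 (g(j := g j)) < loglik y x s2 (g(j := coord_argmax a b))"
    using g coord_argmax_nonneg[OF \<open>b > 0\<close>] by (metis mult_strict_left_mono
        add_strict_left_mono zero_less_divide_1_iff zero_less_numeral)
  moreover have "loglik y x s2 (g(j := coord_argmax a b)) \<le> loglik y x s2 g"
    using g_max g coord_argmax_nonneg[OF \<open>b > 0\<close>] by simp
  ultimately show False by simp
qed

lemma loglik_less_loglik_zero:
  fixes x :: "'p::finite \<Rightarrow> real^'n" and y :: "real^'n"
  assumes s2: "s2 > 0" and h: "\<forall>k. h k \<ge> 0"
  defines "B \<equiv> s2 *\<^sub>R mat 1 :: real^'n^'n"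
  assumes large: "h j * (x j \<bullet> (matrix_inv B *v x j)) > exp (y \<bullet> (matrix_inv B *v y))"
  shows "loglik y x s2 h < loglik y x s2 (\<lambda>_. 0)"
proof -
  define b0 where "b0 = x j \<bullet> (matrix_inv B *v x j)"
  define q0 where "q0 = y \<bullet> (matrix_inv B *v y)"
  let ?Bj = "B + h j *\<^sub>R outer (x j) (x j)"
  have B: "pos_def B" "det B > 0" using s2 by (simp_all add: B_def pos_def_scaleR_mat det_scaleR_mat)
  have hb0: "h j * b0 \<ge> 0"
    using h pos_def_matrix_inv_nonneg[OF B(1)] b0_def by simp
  have det_Bj: "det ?Bj = det B * (1 + h j * b0)"
    unfolding b0_def by (rule det_add_outer[OF pos_def_invertible[OF B(1)]])
  then have "det ?Bj > 0" using B(2) hb0 by simp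
  moreover have "Cmat s2 x h = ?Bj + (\<Sum>k\<in>UNIV - {j}. h k *\<^sub>R outer (x k) (x k))"
    using Cmat_fun_upd[of s2 x h j "h j"] unfolding B_def by (simp add: add_ac)
  ultimately have "det ?Bj \<le> det (Cmat s2 x h)"
    using pos_def_add_sum_outer[OF _ pos_def_add_outer[OF B(1)], where S = "UNIV - {j}" and g = h and x = x] h
    by auto
  then have "ln (det ?Bj) \<le> ln (det (Cmat s2 x h))"
    using \<open>det ?Bj > 0\<close> by simp
  then have "ln (det B) + ln (1 + h j * b0) \<le> ln (det (Cmat s2 x h))"
    using B(2) hb0 unfolding det_Bj by (simp add: ln_mult)
  moreover have "exp q0 < 1 + h j * b0"
    using large unfolding b0_def q0_def by simp
  then have "q0 < ln (1 + h j * b0)"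
    by (metis exp_gt_zero ln_exp ln_less_cancel_iff order_less_trans)
  moreover have "y \<bullet> (matrix_inv (Cmat s2 x h) *v y) \<ge> 0"
    by (rule pos_def_matrix_inv_nonneg[OF pos_def_Cmat(1)[OF s2 h]])
  moreover have "Cmat s2 x (\<lambda>_. 0) = B" unfolding Cmat_eq_sum_UNIV B_def by simp
  ultimately show ?thesis
    unfolding loglik_eq_quadratic_form q0_def by simp
qed

lemma continuous_on_loglik:
  fixes x :: "'p::finite \<Rightarrow> real^'n" and y :: "real^'n"
  assumes s2: "s2 > 0"
  shows "continuous_on {v::real^'p. \<forall>j. v$j \<ge> 0} (\<lambda>v. loglik y x s2 (\<lambda>j. v$j))"
proof -
  let ?S = "{v::real^'p. \<forall>j. v$j \<ge> 0}"
  define M where "M v = Cmat s2 x (\<lambda>j. v$j)" for v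
  have M: "pos_def (M v)" "det (M v) > 0" if "v \<in> ?S" for v
    using pos_def_Cmat[OF s2, of "\<lambda>j. v$j" x] that s2 unfolding M_def
    by (auto intro: less_le_trans[OF zero_less_power])
  have M_cont: "continuous_on ?S M"
    unfolding M_def Cmat_eq_sum_UNIV by (intro continuous_intros)
  then have det_cont: "continuous_on ?S (\<lambda>v. det (M v))"
    by (rule continuous_on_det)
  have "continuous_on ?S (\<lambda>v. if l = k then y$i else M v $i$l)" for i l k
    using M_cont by (cases "l = k") (simp_all add: continuous_on_component)
  then have cramer_cont: "continuous_on ?S (\<lambda>v. det (\<chi> i l. if l = k then y$i else M v $i$l))" for k
    by (intro continuous_on_det continuous_on_vec_lambda)
  \<comment> \<open>Cramer's rule expresses \<open>C\<^sup>-\<^sup>1 y\<close> by determinants, which are polynomial in \<open>v\<close>\<close>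
  have "matrix_inv (M v) *v y = (\<chi> k. det (\<chi> i l. if l = k then y$i else M v $i$l) / det (M v))"
    if "v \<in> ?S" for v
    using cramer[of "M v" "matrix_inv (M v) *v y" y] M[OF that]
      matrix_vector_mul_matrix_inv_right[OF pos_def_invertible[OF M(1)[OF that]]]
    by auto
  then have "loglik y x s2 (\<lambda>j. v$j) = - (1/2) * ln (det (M v))
      - (1/2) * (y \<bullet> (\<chi> k. det (\<chi> i l. if l = k then y$i else M v $i$l) / det (M v)))"
    if "v \<in> ?S" for v
    using that unfolding loglik_eq_quadratic_form M_def by simp
  moreover have "continuous_on ?S (\<lambda>v. - (1/2) * ln (det (M v))
      - (1/2) * (y \<bullet> (\<chi> k. det (\<chi> i l. if l = k then y$i else M v $i$l) / det (M v))))"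
    using M(2) by (intro continuous_intros det_cont cramer_cont) (auto simp: less_le)
  ultimately show ?thesis by (metis (no_types, lifting) continuous_on_cong)
qed

lemma loglik_has_maximum:
  fixes x :: "'p::finite \<Rightarrow> real^'n" and y :: "real^'n"
  assumes s2: "s2 > 0" and x: "\<And>j. x j \<noteq> 0"
  obtains g where "\<forall>j. g j \<ge> 0"
    and "\<forall>h. (\<forall>j. h j \<ge> 0) \<longrightarrow> loglik y x s2 h \<le> loglik y x s2 g"
proof -
  define B where "B = (s2 *\<^sub>R mat 1 :: real^'n^'n)"
  \<comment> \<open>a coordinate beyond \<open>r j\<close> pushes \<open>\<ell>\<close> below \<open>\<ell>(0)\<close>, so the maximum over the box \<open>[0, R]\<^sup>p\<close> is global\<close>
  define r where "r j = exp (y \<bullet> (matrix_inv B *v y)) / (x j \<bullet> (matrix_inv B *v x j))" for j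
  define R where "R = (\<Sum>j\<in>UNIV. r j)"
  have b0: "x j \<bullet> (matrix_inv B *v x j) > 0" for j
    unfolding B_def by (rule pos_def_matrix_inv_pos[OF pos_def_scaleR_mat[OF s2] x])
  then have "0 < r j" for j
    unfolding r_def by simp
  then have r: "0 \<le> r j" "r j \<le> R" for j
    unfolding R_def by (auto intro!: member_le_sum simp: less_imp_le)
  define K where "K = cbox (0::real^'p) (\<chi> j. R)"
  have K: "v \<in> K \<longleftrightarrow> (\<forall>j. 0 \<le> v$j \<and> v$j \<le> R)" for v
    unfolding K_def mem_box_cart by simp
  have compact_K: "compact K" unfolding K_def by (rule compact_cbox)
  have "0 \<le> R" unfolding R_def by (rule sum_nonneg) (rule r(1))
  then have zero_in_K: "0 \<in> K" by (simp add: K)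
  then have "K \<noteq> {}" by blast
  moreover have "continuous_on K (\<lambda>v. loglik y x s2 (\<lambda>j. v$j))"
    by (rule continuous_on_subset[OF continuous_on_loglik[OF s2]]) (auto simp: K)
  ultimately have "\<exists>v\<in>K. \<forall>u\<in>K. loglik y x s2 (\<lambda>j. u$j) \<le> loglik y x s2 (\<lambda>j. v$j)"
    by (rule continuous_attains_sup[OF compact_K])
  then obtain v where v: "v \<in> K"
    and v_max: "\<And>u. u \<in> K \<Longrightarrow> loglik y x s2 (\<lambda>j. u$j) \<le> loglik y x s2 (\<lambda>j. v$j)"
    by auto
  have "\<forall>j. v$j \<ge> 0" using v K by auto
  moreover have "\<forall>h. (\<forall>j. h j \<ge> 0) \<longrightarrow> loglik y x s2 h \<le> loglik y x s2 (\<lambda>j. v$j)"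
  proof (intro allI impI)
    fix h :: "'p \<Rightarrow> real"
    assume h: "\<forall>j. h j \<ge> 0"
    show "loglik y x s2 h \<le> loglik y x s2 (\<lambda>j. v$j)"
    proof (cases "\<forall>j. h j \<le> R")
      case True
      then show ?thesis using v_max[of "\<chi> j. h j"] h by (simp add: K)
    next
      case False
      then obtain j where "h j > R" by (auto simp: not_le)
      then have "h j > r j" using r(2)[of j] by linarith
      then have "loglik y x s2 h < loglik y x s2 (\<lambda>_. 0)"
        using loglik_less_loglik_zero[OF s2 h] b0[of j] unfolding r_def B_def
        by (simp add: pos_divide_less_eq)
      then show ?thesis using v_max[OF zero_in_K] by simp
    qed
  qed
  ultimately show thesis by (rule that)
qed

theorem proposition1:
  fixes y :: "real^'n"
    and x :: "'p::finite \<Rightarrow> real^'n"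
    and s2 :: real
  assumes cols_nonzero: "\<And>j. x j \<noteq> 0"
    and s2_pos: "s2 > 0"
  shows "\<exists>g::'p \<Rightarrow> real.
           (\<forall>j. g j \<ge> 0)
         \<and> (\<forall>h::'p \<Rightarrow> real. (\<forall>j. h j \<ge> 0) \<longrightarrow> loglik y x s2 h \<le> loglik y x s2 g)
         \<and> (\<forall>j. let Cj = s2 *\<^sub>R mat 1
                           + (\<Sum>k\<in>supp_idx g - {j}. g k *\<^sub>R outer (x k) (x k));
                    a = x j \<bullet> (matrix_inv Cj *v y);
                    b = x j \<bullet> (matrix_inv Cj *v x j)
                in g j = (if a\<^sup>2 > b then (a\<^sup>2 - b) / b\<^sup>2 else 0))"
proof -
  obtain g where g: "\<forall>j. g j \<ge> 0"
    and g_max: "\<forall>h. (\<forall>j. h j \<ge> 0) \<longrightarrow> loglik y x s2 h \<le> loglik y x s2 g"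
    by (rule loglik_has_maximum[OF s2_pos cols_nonzero])
  moreover have "let Cj = s2 *\<^sub>R mat 1 + (\<Sum>k\<in>supp_idx g - {j}. g k *\<^sub>R outer (x k) (x k));
                 a = x j \<bullet> (matrix_inv Cj *v y);
                 b = x j \<bullet> (matrix_inv Cj *v x j)
             in g j = (if a\<^sup>2 > b then (a\<^sup>2 - b) / b\<^sup>2 else 0)" for j
    using loglik_argmax_coordinate[OF s2_pos cols_nonzero g g_max]
    unfolding Let_def coord_argmax_def .
  ultimately show ?thesis by blast
qed

end
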